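(* Consider the faulty-starter delivery problem described in the context, with finisher starting position $(x,y)$, $y\ge0$, and $(x,y)\notin D(1,1)$. Then for every $a\in[0,1]$ and every algorithm $\mathcal{A}_a$ of the class described in the context, either $\mathrm{CR}_{\mathcal{A}_1}\le\mathrm{CR}_{\mathcal{A}_a}$ or $\mathrm{CR}_{\mathcal{A}_0}\le\mathrm{CR}_{\mathcal{A}_a}$.
   Context: Setting. In the plane let $S=(0,0)$ and $T=(1,0)$. A "starter" drone carrying a package starts at $S$ at time $0$ and moves at unit speed along $\overline{ST}$ towards $T$. At an unknown time $t\in[0,1]$ it fails and stays forever at $(t,0)$ with the package (at time $s$ the package is at $(\min\{s,t\},0)$). A "finisher" drone starts at time $0$ at $P=(x,y)$ with $y\ge0$, moves at unit speed and can stop and turn instantaneously. The package can be handed over only when the drones are co-located; it is delivered at the first time the finisher, carrying the package, is at $T$. An online algorithm $\mathcal{A}$ specifies the finisher's trajectory using only $(x,y)$; $A(t)$ is its delivery time for fail time $t$. $\mathrm{Opt}(t)=\max\{1,\sqrt{(x-t)^2+y^2}+1-t\}$ is the optimal offline delivery time. $\mathrm{CR}_{\mathcal{A}}(t)=A(t)/\mathrm{Opt}(t)$ and $\mathrm{CR}_{\mathcal{A}}=\sup_{0\le t\le1}\mathrm{CR}_{\mathcal{A}}(t)$. $D(c,r)$ denotes the open disk of radius $r$ centered at $(c,0)$. Algorithms. $\mathcal{A}_0$: the finisher goes straight to $S$, then along $\overline{ST}$ towards $T$ until it finds the package, then on to $T$. $\mathcal{A}_1$: the finisher goes straight to $T$,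 then along the segment towards $S$ until it finds the package, then returns to $T$. For $a\in[0,1]$, an algorithm $\mathcal{A}_a$ is any online algorithm in which the finisher moves from $P$ along a straight line to $(a,0)$ and afterwards remains within $\overline{ST}$ until it picks up the package, after which it goes to $T$. *)

theory Defs
  imports "HOL-Analysis.Analysis"
begin

text \<open>Points of the plane are pairs of reals; the product norm is Euclidean.
  S = (0,0), T = (1,0).\<close>

definition ptS :: "real \<times> real" where "ptS = (0, 0)"
definition ptT :: "real \<times> real" where "ptT = (1, 0)"

definition D :: "real \<Rightarrow> real \<Rightarrow> (real \<times> real) set" where
  "D c r = ball (c, 0) r"

text \<open>Position of the package at time s when the starter fails at time t.\<close>
definition pkg :: "real \<Rightarrow> real \<Rightarrow> real \<times> real" where
  "pkg t s = (min s t, 0)"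

text \<open>A search trajectory g (the finisher's position at time s before it holds
  the package, which depends only on the start point).\<close>
definition meet_times :: "(real \<Rightarrow> real \<times> real) \<Rightarrow> real \<Rightarrow> real set" where
  "meet_times g t = {s. 0 \<le> s \<and> g s = pkg t s}"

definition delivery :: "(real \<Rightarrow> real \<times> real) \<Rightarrow> real \<Rightarrow> ereal" where
  "delivery g t =
     (if meet_times g t = {} then \<infinity>
      else ereal (Inf (meet_times g t) + dist (g (Inf (meet_times g t))) ptT))"

definition Opt :: "real \<Rightarrow> real \<Rightarrow> real \<Rightarrow> real" where
  "Opt x y t = max 1 (sqrt ((x - t)\<^sup>2 + y\<^sup>2) + 1 - t)"

definition CR :: "real \<Rightarrow> real \<Rightarrow> (real \<Rightarrow> real \<times> real) \<Rightarrow> ereal" where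
  "CR x y g = (SUP t\<in>{0..1}. delivery g t / ereal (Opt x y t))"

definition line :: "real \<times> real \<Rightarrow> real \<times> real \<Rightarrow> real \<Rightarrow> real \<times> real" where
  "line p q s = p + (min s (dist p q) / dist p q) *\<^sub>R (q - p)"

definition trajA0 :: "real \<Rightarrow> real \<Rightarrow> real \<Rightarrow> real \<times> real" where
  "trajA0 x y s = (let d = dist (x, y) ptS in
     if s \<le> d then line (x, y) ptS s else (min (s - d) 1, 0))"

definition trajA1 :: "real \<Rightarrow> real \<Rightarrow> real \<Rightarrow> real \<times> real" where
  "trajA1 x y s = (let d = dist (x, y) ptT in
     if s \<le> d then line (x, y) ptT s else (max (1 - (s - d)) 0, 0))"

definition alg_class :: "real \<Rightarrow> real \<Rightarrow> real \<Rightarrow> (real \<Rightarrow> real \<times> real) \<Rightarrow> bool" where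
  "alg_class x y a g \<longleftrightarrow>
     (\<forall>s1 s2. 0 \<le> s1 \<longrightarrow> 0 \<le> s2 \<longrightarrow> dist (g s1) (g s2) \<le> \<bar>s1 - s2\<bar>) \<and>
     (\<forall>s. 0 \<le> s \<and> s \<le> dist (x, y) (a, 0) \<longrightarrow> g s = line (x, y) (a, 0) s) \<and>
     (\<forall>s. dist (x, y) (a, 0) \<le> s \<longrightarrow> g s \<in> closed_segment ptS ptT)"

end

theory Submission
  imports Defs
begin

text \<open>Only two properties of the finisher's trajectory g are used: it starts at P and has
  speed at most one.
  Let s be the first time g meets a package that failed at T.
  If g visits S by time s, then for t = 1 it delivers no earlier than |PS| + 1, which
  A0 achieves for every t, while Opt is smallest at t = 1.
  Otherwise g reaches T at time s having avoided S; let c > 0 be the leftmost point of ST it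
  has visited by then. For t < c it meets the package only after coming back from T, so A1
  is at least as fast. For t \<ge> c the ratio of A1 is at most 1 + 2(1 - t)/Opt(t), which
  decreases in t because P lies outside D(1,1), and the ratio of g tends to at least
  1 + 2(1 - c)/Opt(c) as t increases to c.\<close>

lemma dist_axis: "dist (a, 0::real) (b, 0) = \<bar>a - b\<bar>"
  by (simp add: dist_Pair_Pair dist_real_def)

lemma closed_meet_times:
  assumes "continuous_on {0..} g"
  shows "closed (meet_times g t)"
proof -
  have "meet_times g t = {0..} \<inter> (\<lambda>s. g s - pkg t s) -` {0}"
    by (auto simp: meet_times_def)
  moreover have "continuous_on {0..} (\<lambda>s. g s - pkg t s)"
    unfolding pkg_def by (intro continuous_intros assms)
  ultimately show ?thesis
    by (metis closed_atLeast closed_singleton continuous_closed_preimage)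
qed

lemma first_meet_time:
  assumes "continuous_on {0..} g" "meet_times g t \<noteq> {}"
  shows "Inf (meet_times g t) \<in> meet_times g t"
    and "s \<in> meet_times g t \<Longrightarrow> Inf (meet_times g t) \<le> s"
proof -
  have "bdd_below (meet_times g t)"
    by (rule bdd_belowI[of _ 0]) (auto simp: meet_times_def)
  then show "Inf (meet_times g t) \<in> meet_times g t" "s \<in> meet_times g t \<Longrightarrow> Inf (meet_times g t) \<le> s"
    using closed_contains_Inf[OF assms(2) _ closed_meet_times[OF assms(1)]] by (auto intro: cInf_lower)
qed

lemma delivery_first_meet_time:
  assumes "continuous_on {0..} g" "meet_times g t \<noteq> {}" "t \<le> 1"
  shows "delivery g t = ereal (Inf (meet_times g t) + 1 - min (Inf (meet_times g t)) t)"
proof -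
  have "g (Inf (meet_times g t)) = pkg t (Inf (meet_times g t))"
    using first_meet_time(1)[OF assms(1,2)] by (simp add: meet_times_def)
  then show ?thesis
    using assms by (simp add: delivery_def pkg_def ptT_def dist_axis)
qed

lemma delivery_le:
  assumes "continuous_on {0..} g" "s \<in> meet_times g t" "t \<le> 1"
  shows "delivery g t \<le> ereal (s + 1 - min s t)"
proof -
  have ne: "meet_times g t \<noteq> {}" using assms(2) by blast
  have "Inf (meet_times g t) \<le> s" using first_meet_time(2)[OF assms(1) ne assms(2)] .
  then show ?thesis using delivery_first_meet_time[OF assms(1) ne assms(3)]
    by (auto simp: min_def)
qed

lemma delivery_ge:
  assumes "continuous_on {0..} g" "t \<le> 1"
    and "\<And>s. s \<in> meet_times g t \<Longrightarrow> b \<le> s + 1 - min s t"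
  shows "ereal b \<le> delivery g t"
proof (cases "meet_times g t = {}")
  case True
  then show ?thesis by (simp add: delivery_def)
next
  case False
  then show ?thesis
    using delivery_first_meet_time[OF assms(1) False assms(2)] first_meet_time(1)[OF assms(1) False] assms(3)
    by simp
qed

lemma Opt_eq_dist: "Opt x y t = max 1 (dist (x, y) (t, 0) + 1 - t)"
  by (simp add: Opt_def dist_Pair_Pair dist_real_def)

lemma Opt_ge_1: "1 \<le> Opt x y t"
  by (simp add: Opt_def)

lemma dist_T_le:
  fixes x y t :: real
  assumes "t \<le> 1"
  shows "dist (x, y) (1, 0) \<le> dist (x, y) (t, 0) + 1 - t"
  using dist_triangle[of "(x, y)" "(1::real, 0::real)" "(t, 0::real)"] assms by (simp add: dist_axis)

lemma dist_T_le_Opt: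
  assumes "t \<le> 1"
  shows "dist (x, y) (1, 0) \<le> Opt x y t"
  using dist_T_le[OF assms, of x y] by (simp add: Opt_eq_dist)

lemma Opt_1_le_Opt:
  assumes "t \<le> 1"
  shows "Opt x y 1 \<le> Opt x y t"
  using dist_T_le_Opt[OF assms, of x y] Opt_ge_1[of x y t]
  by (simp add: Opt_eq_dist)

lemma Opt_eq_outside_D:
  assumes "1 \<le> dist (x, y) (1, 0)" "t \<le> 1"
  shows "Opt x y t = dist (x, y) (t, 0) + 1 - t"
  using dist_T_le[OF assms(2), of x y] assms
  by (simp add: Opt_eq_dist)

lemma continuous_Opt: "isCont (Opt x y) c"
  unfolding Opt_def[abs_def] by (intro continuous_intros)

lemma delivery_div_Opt_le_CR: "t \<in> {0..1} \<Longrightarrow> delivery g t / ereal (Opt x y t) \<le> CR x y g"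
  unfolding CR_def by (rule SUP_upper)

lemma CR_leI: "(\<And>t. t \<in> {0..1} \<Longrightarrow> delivery g t / ereal (Opt x y t) \<le> C) \<Longrightarrow> CR x y g \<le> C"
  unfolding CR_def by (rule SUP_least)

lemma delivery_div_Opt_le:
  "delivery g t \<le> ereal b \<Longrightarrow> delivery g t / ereal (Opt x y t) \<le> ereal (b / Opt x y t)"
  using ereal_divide_right_mono[of "delivery g t" "ereal b" "ereal (Opt x y t)"] Opt_ge_1[of x y t]
  by simp

lemma CR_geI:
  assumes "t \<in> {0..1}" "ereal b \<le> delivery g t"
  shows "ereal (b / Opt x y t) \<le> CR x y g"
proof -
  have "ereal (b / Opt x y t) \<le> delivery g t / ereal (Opt x y t)"
    using ereal_divide_right_mono[OF assms(2), of "ereal (Opt x y t)"] Opt_ge_1[of x y t] by simp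
  also have "\<dots> \<le> CR x y g" by (rule delivery_div_Opt_le_CR[OF assms(1)])
  finally show ?thesis .
qed

lemma CR_eq_infinity:
  assumes "t \<in> {0..1}" "meet_times g t = {}"
  shows "CR x y g = \<infinity>"
  using delivery_div_Opt_le_CR[OF assms(1), of g x y] Opt_ge_1[of x y t] assms(2)
  by (simp add: delivery_def)

lemma CR_ge_left_limit:
  assumes "0 < c" "c \<le> 1" "isCont f c"
    and "\<And>t. 0 \<le> t \<Longrightarrow> t < c \<Longrightarrow> ereal (f t) \<le> delivery g t"
  shows "ereal (f c / Opt x y c) \<le> CR x y g"
proof -
  have "((\<lambda>t. f t / Opt x y t) \<longlongrightarrow> f c / Opt x y c) (at_left c)"
    using assms(3) continuous_Opt[where x = x and y = y and c = c] Opt_ge_1[of x y c]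
    by (intro tendsto_intros) (auto simp: isCont_def filterlim_at_split)
  then have "((\<lambda>t. ereal (f t / Opt x y t)) \<longlongrightarrow> ereal (f c / Opt x y c)) (at_left c)"
    by simp
  moreover have "eventually (\<lambda>t. ereal (f t / Opt x y t) \<le> CR x y g) (at_left c)"
    unfolding eventually_at_left_field
    using assms by (intro exI[of _ 0]) (auto intro!: CR_geI)
  ultimately show ?thesis
    by (rule tendsto_upperbound) simp
qed

lemma line_end: "line p q (dist p q) = q"
  by (cases "p = q") (auto simp: line_def)

lemma continuous_on_line: "continuous_on A (line p q)"
proof (cases "p = q")
  case True
  then show ?thesis by (simp add: line_def)
next
  case False
  then show ?thesis unfolding line_def by (intro continuous_intros) auto
qed

lemma continuous_on_trajA0: "continuous_on {0..} (trajA0 x y)"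
  unfolding trajA0_def Let_def
  by (rule continuous_on_cases_le)
    (auto intro!: continuous_intros continuous_on_line simp: line_end ptS_def)

lemma continuous_on_trajA1: "continuous_on {0..} (trajA1 x y)"
  unfolding trajA1_def Let_def
  by (rule continuous_on_cases_le)
    (auto intro!: continuous_intros continuous_on_line simp: line_end ptT_def)

lemma delivery_trajA0_le:
  fixes x y t :: real
  assumes "0 \<le> t" "t \<le> 1"
  shows "delivery (trajA0 x y) t \<le> ereal (dist (x, y) (0, 0) + 1)"
proof -
  define d where "d = dist (x, y) ptS"
  have "trajA0 x y (d + t) = (t, 0)"
    using assms line_end[of "(x, y)" ptS] by (simp add: trajA0_def Let_def d_def ptS_def)
  then have "d + t \<in> meet_times (trajA0 x y) t"
    using assms by (simp add: meet_times_def pkg_def d_def)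
  from delivery_le[OF continuous_on_trajA0 this assms(2)] show ?thesis
    by (simp add: d_def ptS_def)
qed

lemma delivery_trajA1_le:
  fixes x y t :: real
  assumes "0 \<le> t" "t \<le> 1" "1 \<le> dist (x, y) (1, 0)"
  shows "delivery (trajA1 x y) t \<le> ereal (dist (x, y) (1, 0) + 2 - 2 * t)"
proof -
  define d where "d = dist (x, y) ptT"
  have "trajA1 x y (d + 1 - t) = (t, 0)"
    using assms line_end[of "(x, y)" ptT] by (simp add: trajA1_def Let_def d_def ptT_def)
  then have "d + 1 - t \<in> meet_times (trajA1 x y) t"
    using assms by (simp add: meet_times_def pkg_def d_def ptT_def)
  from delivery_le[OF continuous_on_trajA1 this assms(2)] show ?thesis
    using assms by (simp add: d_def ptT_def add.commute)
qed

text \<open>The closed disk of radius s < 1 about (s, 0) lies in D(1,1) apart from S, where the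
  two boundary circles touch.\<close>

lemma eq_origin_if_dist_le:
  fixes x y s :: real
  assumes far: "1 \<le> dist (x, y) (1, 0)" and "0 \<le> s" "s < 1" "dist (x, y) (s, 0) \<le> s"
  shows "(x, y) = (0, 0)"
proof -
  have "sqrt ((x - s)\<^sup>2 + y\<^sup>2) \<le> sqrt (s\<^sup>2)"
    using assms(2,4) by (simp add: dist_Pair_Pair dist_real_def)
  moreover have "sqrt 1 \<le> sqrt ((x - 1)\<^sup>2 + y\<^sup>2)"
    using far by (simp add: dist_Pair_Pair dist_real_def)
  ultimately have "(x - s)\<^sup>2 + y\<^sup>2 \<le> s\<^sup>2" "1 \<le> (x - 1)\<^sup>2 + y\<^sup>2"
    unfolding real_sqrt_le_iff .
  then have inner: "x\<^sup>2 + y\<^sup>2 \<le> 2 * x * s" and outer: "2 * x \<le> x\<^sup>2 + y\<^sup>2"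
    by (simp_all add: power2_eq_square algebra_simps)
  have "x * (1 - s) \<le> 0"
    using inner outer by (simp add: algebra_simps)
  then have "x \<le> 0"
    using assms(3) by (simp add: mult_le_0_iff)
  then have "x\<^sup>2 + y\<^sup>2 \<le> 0"
    using inner assms(2) by (smt (verit) mult_nonpos_nonneg)
  then show ?thesis by (simp add: sum_power2_le_zero_iff)
qed

lemma dist_axis_mult_remaining_le:
  fixes x y c t :: real
  assumes far: "1 \<le> dist (x, y) (1, 0)" and ct: "0 \<le> c" "c \<le> t" "t \<le> 1"
  shows "(1 - t) * dist (x, y) (c, 0) \<le> (1 - c) * dist (x, y) (t, 0)"
proof -
  define X where "X = 1 - x"
  have dist_sq: "(dist (x, y) (u, 0))\<^sup>2 = (x - u)\<^sup>2 + y\<^sup>2" for u :: real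
    by (simp add: dist_Pair_Pair dist_real_def)
  have "sqrt 1 \<le> sqrt (X\<^sup>2 + y\<^sup>2)"
    using far by (simp add: dist_Pair_Pair dist_real_def X_def power2_commute)
  then have "1 \<le> X\<^sup>2 + y\<^sup>2"
    unfolding real_sqrt_le_iff .
  then have abs_X: "\<bar>X\<bar> \<le> X\<^sup>2 + y\<^sup>2"
  proof (cases "\<bar>X\<bar> \<le> 1")
    case False
    then have "\<bar>X\<bar> * 1 \<le> \<bar>X\<bar> * \<bar>X\<bar>"
      by (intro mult_left_mono) auto
    then have "\<bar>X\<bar> \<le> X\<^sup>2"
      by (simp add: power2_eq_square)
    then show ?thesis
      using zero_le_power2[of y] by linarith
  qed simp
  have weights: "2 * (1 - c) * (1 - t) \<le> 2 - c - t"
    using mult_left_le[of "1 - t" "1 - c"] mult_left_le_one_le[of "1 - t" "1 - c"] ct by (simp add: algebra_simps)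
  have "2 * (1 - c) * (1 - t) * X \<le> 2 * (1 - c) * (1 - t) * \<bar>X\<bar>"
    using ct by (intro mult_left_mono) auto
  also have "\<dots> \<le> (2 - c - t) * \<bar>X\<bar>"
    by (rule mult_right_mono[OF weights]) simp
  also have "\<dots> \<le> (2 - c - t) * (X\<^sup>2 + y\<^sup>2)"
    using abs_X ct by (intro mult_left_mono) auto
  finally have "0 \<le> (t - c) * ((2 - c - t) * (X\<^sup>2 + y\<^sup>2) - 2 * (1 - c) * (1 - t) * X)"
    using ct by (intro mult_nonneg_nonneg) auto
  also have "\<dots> = ((1 - c) * dist (x, y) (t, 0))\<^sup>2 - ((1 - t) * dist (x, y) (c, 0))\<^sup>2"
    unfolding power_mult_distrib dist_sq by (simp add: X_def power2_eq_square algebra_simps)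
  finally have "((1 - t) * dist (x, y) (c, 0))\<^sup>2 \<le> ((1 - c) * dist (x, y) (t, 0))\<^sup>2"
    by simp
  then show ?thesis
    by (rule power2_le_imp_le) (use ct in simp)
qed

lemma remaining_fraction_antimono:
  fixes x y c t :: real
  assumes far: "1 \<le> dist (x, y) (1, 0)" and ct: "0 \<le> c" "c \<le> t" "t \<le> 1"
  shows "(1 - t) / Opt x y t \<le> (1 - c) / Opt x y c"
proof -
  have "(1 - t) * Opt x y c \<le> (1 - c) * Opt x y t"
    unfolding Opt_eq_outside_D[OF far order_trans[OF ct(2,3)]] Opt_eq_outside_D[OF far ct(3)]
    using dist_axis_mult_remaining_le[OF assms] by (simp add: algebra_simps)
  moreover have "0 < Opt x y c" "0 < Opt x y t"
    using Opt_ge_1[of x y] by (auto intro: less_le_trans[OF zero_less_one])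
  ultimately show ?thesis
    by (simp add: divide_le_eq le_divide_eq mult.commute)
qed

lemma leftmost_axis_visit:
  fixes g :: "real \<Rightarrow> real \<times> real"
  assumes "continuous_on {0..s1} g" "0 \<le> s1" "g s1 = (1, 0)"
  obtains sc c where "sc \<in> {0..s1}" "g sc = (c, 0)" "c \<in> {0..1}"
    "\<And>s u. s \<in> {0..s1} \<Longrightarrow> u \<in> {0..1} \<Longrightarrow> g s = (u, 0) \<Longrightarrow> c \<le> u"
proof -
  define K where "K = {0..s1} \<inter> g -` ({0..1} \<times> {0})"
  have "closed K"
    unfolding K_def by (intro continuous_closed_preimage[OF assms(1)] closed_Times) auto
  moreover have "bounded K"
    by (rule bounded_subset[of "{0..s1}"]) (auto simp: K_def)
  moreover have "K \<noteq> {}"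
    using assms by (auto simp: K_def)
  moreover have "continuous_on K (\<lambda>s. fst (g s))"
    by (intro continuous_intros continuous_on_subset[OF assms(1)]) (auto simp: K_def)
  ultimately obtain sc where "sc \<in> K" and leftmost: "\<And>s. s \<in> K \<Longrightarrow> fst (g sc) \<le> fst (g s)"
    by (metis compact_eq_bounded_closed continuous_attains_inf)
  then show ?thesis
    by (intro that[of sc "fst (g sc)"]) (auto simp: K_def mem_Times_iff prod_eq_iff)
qed

lemma delivery_ge_after_visit_T:
  fixes g :: "real \<Rightarrow> real \<times> real"
  assumes lip: "1-lipschitz_on {0..} g" and "0 \<le> s1" "g s1 = (1, 0)" "0 \<le> t" "t \<le> 1"
    and avoid: "\<And>s u. s \<in> {0..s1} \<Longrightarrow> u \<in> {0..t} \<Longrightarrow> g s \<noteq> (u, 0)"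
  shows "ereal (s1 + 2 - 2 * t) \<le> delivery g t"
proof (rule delivery_ge[OF lipschitz_on_continuous_on[OF lip] \<open>t \<le> 1\<close>])
  fix s assume "s \<in> meet_times g t"
  then have s: "0 \<le> s" "g s = (min s t, 0)"
    by (auto simp: meet_times_def pkg_def)
  then have "s1 < s"
    using avoid[of s "min s t"] assms(4) by force
  then have "dist (g s1) (g s) \<le> s - s1"
    using lipschitz_onD[OF lip, of s1 s] assms(2) by (simp add: dist_real_def)
  then have "1 - min s t \<le> s - s1"
    using assms(3,5) s by (simp add: dist_axis)
  then show "s1 + 2 - 2 * t \<le> s + 1 - min s t"
    by linarith
qed

lemma CR_trajA0_le_if_S_first:
  fixes x y s0 :: real and g :: "real \<Rightarrow> real \<times> real"
  assumes lip: "1-lipschitz_on {0..} g" and start: "g 0 = (x, y)"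
    and "0 \<le> s0" "g s0 = (0, 0)" and before: "\<And>s. s \<in> meet_times g 1 \<Longrightarrow> s0 \<le> s"
  shows "CR x y (trajA0 x y) \<le> CR x y g"
proof -
  define b where "b = dist (x, y) (0, 0) + 1"
  have "dist (x, y) (0, 0) \<le> s0"
    using lipschitz_onD[OF lip, of 0 s0] assms(3,4) start by (simp add: dist_real_def)
  have "ereal b \<le> delivery g 1"
  proof (rule delivery_ge[OF lipschitz_on_continuous_on[OF lip]])
    fix s assume "s \<in> meet_times g 1"
    then have "0 \<le> s" "g s = (min s 1, 0)" "s0 \<le> s"
      using before by (auto simp: meet_times_def pkg_def)
    then have "dist (g s0) (g s) \<le> s - s0"
      using lipschitz_onD[OF lip, of s0 s] assms(3) by (simp add: dist_real_def)
    then have "min s 1 \<le> s - s0"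
      using \<open>g s = (min s 1, 0)\<close> \<open>0 \<le> s\<close> assms(4) by (simp add: dist_axis)
    then show "b \<le> s + 1 - min s 1"
      using \<open>dist (x, y) (0, 0) \<le> s0\<close> by (simp add: b_def)
  qed simp
  then have "ereal (b / Opt x y 1) \<le> CR x y g"
    by (intro CR_geI) auto
  moreover have "CR x y (trajA0 x y) \<le> ereal (b / Opt x y 1)"
  proof (rule CR_leI)
    fix t :: real assume t: "t \<in> {0..1}"
    then have "delivery (trajA0 x y) t / ereal (Opt x y t) \<le> ereal (b / Opt x y t)"
      by (intro delivery_div_Opt_le) (simp add: b_def delivery_trajA0_le)
    also have "b / Opt x y t \<le> b / Opt x y 1"
      using t Opt_1_le_Opt[of t x y] Opt_ge_1[of x y 1] by (intro divide_left_mono) (auto simp: b_def)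
    finally show "delivery (trajA0 x y) t / ereal (Opt x y t) \<le> ereal (b / Opt x y 1)"
      by simp
  qed
  ultimately show ?thesis
    by (rule order_trans[rotated])
qed

lemma CR_trajA1_le_if_T_first:
  fixes x y s1 :: real and g :: "real \<Rightarrow> real \<times> real"
  assumes far: "1 \<le> dist (x, y) (1, 0)"
    and lip: "1-lipschitz_on {0..} g" and start: "g 0 = (x, y)"
    and "0 \<le> s1" "g s1 = (1, 0)" and avoid: "(0, 0) \<notin> g ` {0..s1}"
  shows "CR x y (trajA1 x y) \<le> CR x y g"
proof -
  have travel: "dist (g s) (g s') \<le> s' - s" if "0 \<le> s" "s \<le> s'" for s s'
    using lipschitz_onD[OF lip, of s s'] that by (simp add: dist_real_def)
  obtain sc c where sc: "sc \<in> {0..s1}" "g sc = (c, 0)" "c \<in> {0..1}"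
    and leftmost: "\<And>s u. s \<in> {0..s1} \<Longrightarrow> u \<in> {0..1} \<Longrightarrow> g s = (u, 0) \<Longrightarrow> c \<le> u"
    using leftmost_axis_visit[OF continuous_on_subset[OF lipschitz_on_continuous_on[OF lip]]] assms(4,5)
    by (metis atLeast_iff atLeastAtMost_iff subsetI)
  have "0 < c"
    using sc avoid by (metis atLeastAtMost_iff image_eqI order_less_le)
  have "Opt x y c \<le> s1"
    using travel[of 0 sc] travel[of sc s1] sc assms(5) start
    by (simp add: Opt_eq_outside_D[OF far] dist_axis)
  have "dist (x, y) (1, 0) \<le> s1"
    using travel[of 0 s1] assms(4,5) start by simp
  have late: "ereal (s1 + 2 - 2 * t) \<le> delivery g t" if t: "0 \<le> t" "t < c" for t
  proof (rule delivery_ge_after_visit_T[OF lip assms(4,5) t(1)])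
    show "t \<le> 1"
      using t sc(3) by simp
    fix s u assume "s \<in> {0..s1}" "u \<in> {0..t}"
    then show "g s \<noteq> (u, 0)"
      using leftmost[of s u] t sc(3) by fastforce
  qed
  have "ereal ((Opt x y c + 2 - 2 * c) / Opt x y c) \<le> CR x y g"
  proof (rule CR_ge_left_limit[where f = "\<lambda>t. Opt x y c + 2 - 2 * t", OF \<open>0 < c\<close>])
    fix t assume "0 \<le> t" "t < c"
    then show "ereal (Opt x y c + 2 - 2 * t) \<le> delivery g t"
      using \<open>Opt x y c \<le> s1\<close> by (intro order_trans[OF _ late]) simp_all
  qed (use sc in \<open>auto intro: continuous_intros\<close>)
  moreover have "(Opt x y c + 2 - 2 * c) / Opt x y c = 1 + 2 * ((1 - c) / Opt x y c)"
    using Opt_ge_1[of x y c] by (simp add: field_simps)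
  ultimately have CR_c: "ereal (1 + 2 * ((1 - c) / Opt x y c)) \<le> CR x y g"
    by simp
  show ?thesis
  proof (rule CR_leI)
    fix t :: real assume t: "t \<in> {0..1}"
    have A1: "delivery (trajA1 x y) t \<le> ereal (dist (x, y) (1, 0) + 2 - 2 * t)"
      using t far by (simp add: delivery_trajA1_le)
    show "delivery (trajA1 x y) t / ereal (Opt x y t) \<le> CR x y g"
    proof (cases "t < c")
      case True
      have "delivery (trajA1 x y) t \<le> ereal (s1 + 2 - 2 * t)"
        using \<open>dist (x, y) (1, 0) \<le> s1\<close> by (intro order_trans[OF A1]) simp
      also have "\<dots> \<le> delivery g t"
        using late True t by simp
      finally have "delivery (trajA1 x y) t \<le> delivery g t" .
      then have "delivery (trajA1 x y) t / ereal (Opt x y t) \<le> delivery g t / ereal (Opt x y t)"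
        using Opt_ge_1[of x y t] by (intro ereal_divide_right_mono) auto
      also have "\<dots> \<le> CR x y g"
        using t by (rule delivery_div_Opt_le_CR)
      finally show ?thesis .
    next
      case False
      have "delivery (trajA1 x y) t / ereal (Opt x y t) \<le> ereal ((dist (x, y) (1, 0) + 2 - 2 * t) / Opt x y t)"
        by (rule delivery_div_Opt_le[OF A1])
      also have "(dist (x, y) (1, 0) + 2 - 2 * t) / Opt x y t \<le> (Opt x y t + 2 * (1 - t)) / Opt x y t"
        using dist_T_le_Opt[of t x y] t Opt_ge_1[of x y t] by (intro divide_right_mono) auto
      also have "\<dots> = 1 + 2 * ((1 - t) / Opt x y t)"
        using Opt_ge_1[of x y t] by (simp add: field_simps)
      also have "\<dots> \<le> 1 + 2 * ((1 - c) / Opt x y c)"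
        using False sc t by (intro add_left_mono mult_left_mono remaining_fraction_antimono[OF far]) auto
      finally have "delivery (trajA1 x y) t / ereal (Opt x y t) \<le> ereal (1 + 2 * ((1 - c) / Opt x y c))"
        by simp
      then show ?thesis
        using CR_c by (rule order_trans)
    qed
  qed
qed

theorem CR_trajA0_or_trajA1_le:
  fixes x y :: real and g :: "real \<Rightarrow> real \<times> real"
  assumes far: "1 \<le> dist (x, y) (1, 0)"
    and lip: "1-lipschitz_on {0..} g" and start: "g 0 = (x, y)"
  shows "CR x y (trajA1 x y) \<le> CR x y g \<or> CR x y (trajA0 x y) \<le> CR x y g"
proof (cases "meet_times g 1 = {}")
  case True
  then show ?thesis
    using CR_eq_infinity[of 1 g x y] by simp
next
  case False
  define s1 where "s1 = Inf (meet_times g 1)"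
  have cont: "continuous_on {0..} g"
    using lip by (rule lipschitz_on_continuous_on)
  have first: "\<And>s. s \<in> meet_times g 1 \<Longrightarrow> s1 \<le> s"
    unfolding s1_def by (rule first_meet_time(2)[OF cont False])
  have "s1 \<in> meet_times g 1"
    unfolding s1_def by (rule first_meet_time(1)[OF cont False])
  then have "0 \<le> s1" and meet: "g s1 = (min s1 1, 0)"
    by (auto simp: meet_times_def pkg_def)
  show ?thesis
  proof (cases "(0, 0) \<in> g ` {0..s1}")
    case True
    then obtain s0 where "s0 \<in> {0..s1}" "g s0 = (0, 0)"
      by auto
    then have "CR x y (trajA0 x y) \<le> CR x y g"
      using first by (intro CR_trajA0_le_if_S_first[OF lip start]) force+
    then show ?thesis ..
  next
    case False
    have "1 \<le> s1"
    proof (rule ccontr)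
      assume "\<not> 1 \<le> s1"
      moreover have "dist (x, y) (s1, 0) \<le> s1"
        using lipschitz_onD[OF lip, of 0 s1] \<open>0 \<le> s1\<close> \<open>\<not> 1 \<le> s1\<close> meet start
        by (simp add: dist_real_def)
      ultimately have "g 0 = (0, 0)"
        using eq_origin_if_dist_le[OF far \<open>0 \<le> s1\<close>] start by simp
      then show False
        using False \<open>0 \<le> s1\<close> by force
    qed
    then have "g s1 = (1, 0)"
      using meet by simp
    then show ?thesis
      using CR_trajA1_le_if_T_first[OF far lip start \<open>0 \<le> s1\<close> _ False] by simp
  qed
qed

theorem lemma4:
  fixes x y a :: real and g :: "real \<Rightarrow> real \<times> real"
  assumes "0 \<le> y" and "(x, y) \<notin> D 1 1"
    and "0 \<le> a" and "a \<le> 1"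
    and "alg_class x y a g"
  shows "CR x y (trajA1 x y) \<le> CR x y g \<or> CR x y (trajA0 x y) \<le> CR x y g"
proof -
  have "1 \<le> dist (x, y) (1, 0)"
    using assms(2) by (simp add: D_def dist_commute)
  moreover have "1-lipschitz_on {0..} g"
    using assms(5) by (simp add: alg_class_def lipschitz_on_def dist_real_def)
  moreover have "g 0 = (x, y)"
    using assms(5) by (simp add: alg_class_def line_def)
  ultimately show ?thesis
    by (rule CR_trajA0_or_trajA1_le)
qed

end
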